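(* Let $\mathcal A=(Q,\Sigma,\delta,\rho)$ be a connected bireversible Mealy automaton whose labeled orbit tree $\mathfrak t(\mathcal A)$ has no active self-liftable branch, and let $\mathfrak j$ be a jungle tree with trunk of length $n$. For a $\mathfrak j$-word $\mathbf u$ with $|\mathbf u|<n$, a $\sim$-class $\gamma$ of stems containing a stem with prefix $\mathbf u$, and an integer $k\ge0$ with $|\mathbf u|+k\le n$, let $N(\mathbf u,\gamma,k)$ be the number of words $\mathbf v\in Q^k$ such that $\mathbf{uv}$ is a prefix of some stem in $\gamma$. Then $N(\mathbf u,\gamma,k)$ depends only on $|\mathbf u|$ and $k$: if $(\mathbf u,\gamma,k)$ and $(\mathbf u',\gamma',k)$ are two such triples with $|\mathbf u|=|\mathbf u'|$, then $N(\mathbf u,\gamma,k)=N(\mathbf u',\gamma',k)$.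
   Context: Mealy automata. A Mealy automaton is $\mathcal A=(Q,\Sigma,\delta,\rho)$ with $Q,\Sigma$ finite non-empty sets, $\delta=(\delta_i\colon Q\to Q)_{i\in\Sigma}$, $\rho=(\rho_x\colon\Sigma\to\Sigma)_{x\in Q}$; transitions $x\xrightarrow{i\mid\rho_x(i)}\delta_i(x)$. Invertible: each $\rho_x$ a permutation of $\Sigma$; reversible: each $\delta_i$ a permutation of $Q$; bireversible: invertible, reversible, and for each $j\in\Sigma$ the map $x\mapsto\delta_{\rho_x^{-1}(j)}(x)$ is a permutation of $Q$. Connected: the directed graph on $Q$ with edges $x\to\delta_i(x)$ is connected. Extensions: $\rho_x(i\mathbf s)=\rho_x(i)\rho_{\delta_i(x)}(\mathbf s)$; $\rho_{x_1\cdots x_m}=\rho_{x_m}\circ\cdots\circ\rho_{x_1}$; $\delta_i(x\mathbf u)=\delta_i(x)\delta_{\rho_x(i)}(\mathbf u)$ on $Q^*$, $\delta_{i_1\cdots i_m}=\delta_{i_m}\circ\cdots\circ\delta_{i_1}$. The connected components of $\mathcal A^n$ (stateset $Q^n$, transitions $\mathbf u\xrightarrow{i\mid\rho_{\mathbf u}(i)}\delta_i(\mathbf u)$) are, for reversible $\mathcal A$, the orbits of $Q^n$ under the maps $\delta_{\mathbf s}$. Orbit tree $\mathfrak t(\mathcal A)$: vertices at level $n\ge0$ are the connected components of $\mathcal A^n$; an edge from the component of $\mathbf u\in Q^n$ to that of $\mathbf ux$ for all $\mathbf u,x$; edge $C\to D$ labeled $\#D/\#C$. $\top,\bot$ = first/last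 vertex of a downward path; level of an edge/path = level of its top vertex. A word of $Q^*\cup Q^\omega$ represents the initial path through the components of its prefixes. Edge $e$ is liftable to $f$ if every word of $\bot(e)$ has a suffix in $\bot(f)$; paths are liftable if corresponding edges are. $f$ is a legitimate child of $e$ if $\top(f)=\bot(e)$ and $f$ is liftable to $e$. A path/subtree $\mathfrak s$ is $k$-self-liftable if for all $i\ge0$ every path in $\mathfrak s$ starting at level $i+k$ is liftable to a path in $\mathfrak s$ starting at level $i$; self-liftable if $k$-self-liftable for some $k>0$. A branch (infinite initial path) is active if its labels are not eventually all $1$. Jungle trees: for a finite 1-self-liftable initial path $\mathbf e$ of length $n$ whose last edge has at least two legitimate children, all labeled $1$, $\mathfrak j(\mathbf e)$ consists of $\mathbf e$ plus all edges descending from $\bot(\mathbf e)$ that are liftable to the last edge of $\mathbf e$. Stems: the words of $\bot(\mathbf e)\subseteq Q^n$. A $\mathfrak j$-word is a word representing an initial path of $\mathfrak j$. For stems $\mathbf u,\mathbf v$: $\mathbf u\sim\mathbf v$ iff there is $\mathbf s\in Q^*$ such that $\mathbf{usv}$ is a $\mathfrak j$-word and $\rho_{\mathbf{us}}$ is the identity of $\Sigma^*$; $\sim$ is an equivalence relation. *)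

theory Defs
  imports Complex_Main "HOL-Library.Sublist"
begin

text \<open>Mealy automaton with stateset the finite type 'q and alphabet the finite type 'a.
  dl i x = delta_i(x), rh x i = rho_x(i).\<close>

fun rhoA :: "('a \<Rightarrow> 'q \<Rightarrow> 'q) \<Rightarrow> ('q \<Rightarrow> 'a \<Rightarrow> 'a) \<Rightarrow> 'q \<Rightarrow> 'a list \<Rightarrow> 'a list" where
  "rhoA dl rh x [] = []"
| "rhoA dl rh x (i # s) = rh x i # rhoA dl rh (dl i x) s"

fun rhoW :: "('a \<Rightarrow> 'q \<Rightarrow> 'q) \<Rightarrow> ('q \<Rightarrow> 'a \<Rightarrow> 'a) \<Rightarrow> 'q list \<Rightarrow> 'a list \<Rightarrow> 'a list" where
  "rhoW dl rh [] s = s"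
| "rhoW dl rh (x # u) s = rhoW dl rh u (rhoA dl rh x s)"

fun deltaW :: "('a \<Rightarrow> 'q \<Rightarrow> 'q) \<Rightarrow> ('q \<Rightarrow> 'a \<Rightarrow> 'a) \<Rightarrow> 'a \<Rightarrow> 'q list \<Rightarrow> 'q list" where
  "deltaW dl rh i [] = []"
| "deltaW dl rh i (x # u) = dl i x # deltaW dl rh (rh x i) u"

definition bireversible :: "('a \<Rightarrow> 'q \<Rightarrow> 'q) \<Rightarrow> ('q \<Rightarrow> 'a \<Rightarrow> 'a) \<Rightarrow> bool" where
  "bireversible dl rh \<longleftrightarrow> (\<forall>x. bij (rh x)) \<and> (\<forall>i. bij (dl i))
     \<and> (\<forall>j. bij (\<lambda>x. dl (inv (rh x) j) x))"

definition connected_aut :: "('a \<Rightarrow> 'q \<Rightarrow> 'q) \<Rightarrow> ('q \<Rightarrow> 'a \<Rightarrow> 'a) \<Rightarrow> bool" where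
  "connected_aut dl rh \<longleftrightarrow>
     (let E = {(x, dl i x) | x i. True} in \<forall>x y. (x, y) \<in> (E \<union> E\<inverse>)\<^sup>*)"

text \<open>Transitions of A^n (all n at once; they preserve length) and the connected
  component of a word u in A^|u|.\<close>
definition trans_pow :: "('a \<Rightarrow> 'q \<Rightarrow> 'q) \<Rightarrow> ('q \<Rightarrow> 'a \<Rightarrow> 'a) \<Rightarrow> ('q list \<times> 'q list) set" where
  "trans_pow dl rh = {(u, deltaW dl rh i u) | u i. True}"

definition comp :: "('a \<Rightarrow> 'q \<Rightarrow> 'q) \<Rightarrow> ('q \<Rightarrow> 'a \<Rightarrow> 'a) \<Rightarrow> 'q list \<Rightarrow> 'q list set" where
  "comp dl rh u = {v. (u, v) \<in> (trans_pow dl rh \<union> (trans_pow dl rh)\<inverse>)\<^sup>*}"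

definition tedge :: "('a \<Rightarrow> 'q \<Rightarrow> 'q) \<Rightarrow> ('q \<Rightarrow> 'a \<Rightarrow> 'a) \<Rightarrow> 'q list set \<Rightarrow> 'q list set \<Rightarrow> bool" where
  "tedge dl rh C D \<longleftrightarrow> (\<exists>u x. C = comp dl rh u \<and> D = comp dl rh (u @ [x]))"

definition label :: "'q list set \<Rightarrow> 'q list set \<Rightarrow> rat" where
  "label C D = of_nat (card D) / of_nat (card C)"

definition liftable :: "'q list set \<times> 'q list set \<Rightarrow> 'q list set \<times> 'q list set \<Rightarrow> bool" where
  "liftable e f \<longleftrightarrow> (\<forall>w \<in> snd e. \<exists>s. suffix s w \<and> s \<in> snd f)"

definition branch :: "('a \<Rightarrow> 'q \<Rightarrow> 'q) \<Rightarrow> ('q \<Rightarrow> 'a \<Rightarrow> 'a) \<Rightarrow> (nat \<Rightarrow> 'q list set) \<Rightarrow> bool" where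
  "branch dl rh B \<longleftrightarrow> B 0 = comp dl rh [] \<and> (\<forall>j. tedge dl rh (B j) (B (Suc j)))"

definition active_branch :: "(nat \<Rightarrow> 'q list set) \<Rightarrow> bool" where
  "active_branch B \<longleftrightarrow> \<not> (\<exists>N. \<forall>j\<ge>N. label (B j) (B (Suc j)) = 1)"

definition self_liftable_branch :: "(nat \<Rightarrow> 'q list set) \<Rightarrow> bool" where
  "self_liftable_branch B \<longleftrightarrow> (\<exists>k>0. \<forall>j.
      liftable (B (j + k), B (Suc (j + k))) (B j, B (Suc j)))"

definition init_path :: "('a \<Rightarrow> 'q \<Rightarrow> 'q) \<Rightarrow> ('q \<Rightarrow> 'a \<Rightarrow> 'a) \<Rightarrow> nat \<Rightarrow> (nat \<Rightarrow> 'q list set) \<Rightarrow> bool" where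
  "init_path dl rh n P \<longleftrightarrow> P 0 = comp dl rh [] \<and> (\<forall>j<n. tedge dl rh (P j) (P (Suc j)))"

definition legit_child :: "('a \<Rightarrow> 'q \<Rightarrow> 'q) \<Rightarrow> ('q \<Rightarrow> 'a \<Rightarrow> 'a) \<Rightarrow>
    'q list set \<times> 'q list set \<Rightarrow> 'q list set \<times> 'q list set \<Rightarrow> bool" where
  "legit_child dl rh f e \<longleftrightarrow> tedge dl rh (fst f) (snd f) \<and> fst f = snd e \<and> liftable f e"

definition jungle_trunk :: "('a \<Rightarrow> 'q \<Rightarrow> 'q) \<Rightarrow> ('q \<Rightarrow> 'a \<Rightarrow> 'a) \<Rightarrow> nat \<Rightarrow> (nat \<Rightarrow> 'q list set) \<Rightarrow> bool" where
  "jungle_trunk dl rh n P \<longleftrightarrow> n \<ge> 1 \<and> init_path dl rh n P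
     \<and> (\<forall>j. Suc j < n \<longrightarrow> liftable (P (Suc j), P (Suc (Suc j))) (P j, P (Suc j)))
     \<and> (\<exists>f g. f \<noteq> g \<and> legit_child dl rh f (P (n - 1), P n) \<and> legit_child dl rh g (P (n - 1), P n))
     \<and> (\<forall>f. legit_child dl rh f (P (n - 1), P n) \<longrightarrow> label (fst f) (snd f) = 1)"

text \<open>Edges of the jungle tree j(P): the trunk edges, plus all edges descending from P n that
  are liftable to the last trunk edge.  A j-word is a word whose initial path lies in j.\<close>
definition jword :: "('a \<Rightarrow> 'q \<Rightarrow> 'q) \<Rightarrow> ('q \<Rightarrow> 'a \<Rightarrow> 'a) \<Rightarrow> nat \<Rightarrow> (nat \<Rightarrow> 'q list set) \<Rightarrow> 'q list \<Rightarrow> bool" where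
  "jword dl rh n P w \<longleftrightarrow>
     (\<forall>i \<le> min (length w) n. comp dl rh (take i w) = P i)
     \<and> (\<forall>i. n \<le> i \<and> i < length w \<longrightarrow>
          liftable (comp dl rh (take i w), comp dl rh (take (Suc i) w)) (P (n - 1), P n))"

definition stem_equiv :: "('a \<Rightarrow> 'q \<Rightarrow> 'q) \<Rightarrow> ('q \<Rightarrow> 'a \<Rightarrow> 'a) \<Rightarrow> nat \<Rightarrow> (nat \<Rightarrow> 'q list set) \<Rightarrow>
    'q list \<Rightarrow> 'q list \<Rightarrow> bool" where
  "stem_equiv dl rh n P u v \<longleftrightarrow> u \<in> P n \<and> v \<in> P n \<and>
     (\<exists>s. jword dl rh n P (u @ s @ v) \<and> (\<forall>t. rhoW dl rh (u @ s) t = t))"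

definition stem_class :: "('a \<Rightarrow> 'q \<Rightarrow> 'q) \<Rightarrow> ('q \<Rightarrow> 'a \<Rightarrow> 'a) \<Rightarrow> nat \<Rightarrow> (nat \<Rightarrow> 'q list set) \<Rightarrow>
    'q list set \<Rightarrow> bool" where
  "stem_class dl rh n P \<gamma> \<longleftrightarrow> (\<exists>u0 \<in> P n. \<gamma> = {v. stem_equiv dl rh n P u0 v})"

definition Ncount :: "'q list \<Rightarrow> 'q list set \<Rightarrow> nat \<Rightarrow> nat" where
  "Ncount u \<gamma> k = card {v. length v = k \<and> (\<exists>st \<in> \<gamma>. prefix (u @ v) st)}"

end

theory Submission
  imports Defs
begin

text \<open>Every \<open>\<delta>\<^sub>i\<close> maps the stems bijectively onto themselves and, since it carries a witness
  \<open>u s v\<close> of \<open>u \<sim> v\<close> to the witness \<open>\<delta>\<^sub>i(u) s' \<delta>\<^sub>i(v)\<close>, maps each \<open>\<sim>\<close>-class into a class.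
  A permutation of a finite set cannot strictly enlarge the classes anywhere, so \<open>\<delta>\<^sub>i\<close> maps
  classes onto classes, and the class size is constant on the orbit of stems; by transitivity
  of \<open>\<sim>\<close> the classes therefore partition the stems.  Consequently the number
  \<open>N(take m st, class of st, k)\<close> is invariant under every \<open>\<delta>\<^sub>i\<close>, hence constant on the
  orbit \<open>\<bottom>(\<mathbf>e)\<close>, and every triple \<open>(\<mathbf>u, \<gamma>, k)\<close> with \<open>|\<mathbf>u| = m\<close> is of this form.\<close>

fun rho_letter :: "('q \<Rightarrow> 'a \<Rightarrow> 'a) \<Rightarrow> 'q list \<Rightarrow> 'a \<Rightarrow> 'a" where
  "rho_letter rh [] i = i"
| "rho_letter rh (x # u) i = rho_letter rh u (rh x i)"

lemma rho_letter_append: "rho_letter rh (a @ b) i = rho_letter rh b (rho_letter rh a i)"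
  by (induction a arbitrary: i) auto

lemma rhoW_append: "rhoW dl rh (a @ b) t = rhoW dl rh b (rhoW dl rh a t)"
  by (induction a arbitrary: t) auto

lemma rhoW_Cons: "rhoW dl rh w (i # t) = rho_letter rh w i # rhoW dl rh (deltaW dl rh i w) t"
  by (induction w arbitrary: i t) auto

lemma length_deltaW [simp]: "length (deltaW dl rh i u) = length u"
  by (induction u arbitrary: i) auto

lemma deltaW_append:
  "deltaW dl rh i (a @ b) = deltaW dl rh i a @ deltaW dl rh (rho_letter rh a i) b"
  by (induction a arbitrary: i) auto

lemma take_deltaW: "take j (deltaW dl rh i w) = deltaW dl rh i (take j w)"
  by (induction w arbitrary: i j) (auto simp: take_Cons' split: nat.split)

lemma drop_deltaW:
  "drop j (deltaW dl rh i w) = deltaW dl rh (rho_letter rh (take j w) i) (drop j w)"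
proof (cases "j \<le> length w")
  case True
  then show ?thesis
    using deltaW_append[of dl rh i "take j w" "drop j w"] by simp
qed simp

lemma inj_on_deltaW:
  assumes "\<And>i. inj (dl i)"
  shows "inj_on (deltaW dl rh i) A"
proof -
  have "deltaW dl rh i u = deltaW dl rh i v \<Longrightarrow> u = v" for u v
  proof (induction u arbitrary: i v)
    case Nil
    then show ?case by (cases v) auto
  next
    case (Cons x u)
    then show ?case using assms by (cases v) (auto dest: injD)
  qed
  then show ?thesis by (auto intro: inj_onI)
qed

lemma Ncount_deltaW:
  assumes "\<And>i. inj (dl i)"
  shows "Ncount (deltaW dl rh i u) (deltaW dl rh i ` \<Gamma>) k = Ncount u \<Gamma> k"
proof -
  let ?A = "{v. length v = k \<and> (\<exists>st\<in>\<Gamma>. prefix (u @ v) st)}"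
  let ?B = "{v. length v = k \<and> (\<exists>st\<in>deltaW dl rh i ` \<Gamma>. prefix (deltaW dl rh i u @ v) st)}"
  let ?g = "deltaW dl rh (rho_letter rh u i)"
  have "?B = ?g ` ?A"
  proof (intro equalityI subsetI)
    fix v' assume "v' \<in> ?g ` ?A"
    then obtain v st r where v: "v' = ?g v" "length v = k" "st \<in> \<Gamma>" "st = u @ v @ r"
      by (auto simp: prefix_def)
    then have "deltaW dl rh i st = deltaW dl rh i u @ v' @ deltaW dl rh (rho_letter rh (u @ v) i) r"
      by (simp add: deltaW_append rho_letter_append)
    with v show "v' \<in> ?B" by (auto simp: prefix_def)
  next
    fix v' assume "v' \<in> ?B"
    then obtain st r where st: "length v' = k" "st \<in> \<Gamma>"
        and r: "deltaW dl rh i st = deltaW dl rh i u @ v' @ r"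
      by (auto simp: prefix_def)
    have "deltaW dl rh i (take (length u) st) = deltaW dl rh i u"
      using arg_cong[OF r, of "take (length u)"] by (simp add: take_deltaW)
    then have u: "take (length u) st = u"
      by (rule injD[OF inj_on_deltaW[OF assms]])
    define v where "v = take k (drop (length u) st)"
    have "?g v = take k (drop (length u) (deltaW dl rh i st))"
      by (simp add: v_def drop_deltaW take_deltaW u)
    also have "\<dots> = v'" using r st(1) by simp
    finally have "v' = ?g v" ..
    moreover have "length v = k"
      using arg_cong[OF r, of length] st(1) by (simp add: v_def)
    moreover have "prefix (u @ v) st"
    proof -
      have "prefix (u @ v) (u @ drop (length u) st)" by (simp add: v_def take_is_prefix)
      then show ?thesis using u by (metis append_take_drop_id)
    qed
    ultimately show "v' \<in> ?g ` ?A" using st(2) by blast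
  qed
  moreover have "inj_on ?g ?A"
    by (rule inj_on_deltaW[OF assms])
  ultimately show ?thesis by (simp add: Ncount_def card_image)
qed

lemma image_eq_if_image_subset_on_permuted:
  assumes "finite L" and "inj_on g L" and "g ` L = L"
    and "\<And>w. w \<in> L \<Longrightarrow> G w \<subseteq> L"
    and "\<And>w. w \<in> L \<Longrightarrow> g ` G w \<subseteq> G (g w)"
    and "w \<in> L"
  shows "G (g w) = g ` G w"
proof -
  have fin: "finite (G w)" if "w \<in> L" for w
    using finite_subset[OF assms(4) assms(1)] that .
  have card_image_G: "card (g ` G w) = card (G w)" if "w \<in> L" for w
    by (rule card_image) (use inj_on_subset[OF assms(2) assms(4)] that in blast)
  have card_le: "card (G w) \<le> card (G (g w))" if "w \<in> L" for w
  proof -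
    have "g w \<in> L" using assms(3) that by blast
    then show ?thesis
      using card_mono[OF fin assms(5)] card_image_G that by metis
  qed
  have "sum (\<lambda>w. card (G w)) L = sum (\<lambda>w. card (G (g w))) L"
    using sum.reindex[OF assms(2), of "\<lambda>w. card (G w)"] assms(3) by simp
  then have "card (G w) = card (G (g w))"
    by (rule sum_mono_inv) (use card_le assms(1,6) in auto)
  then show ?thesis
    using card_subset_eq[OF fin assms(5)] card_image_G assms(3,6) by (metis image_eqI)
qed

lemma comp_refl [simp]: "u \<in> comp dl rh u"
  by (simp add: comp_def)

lemma comp_deltaW_mem: "deltaW dl rh i u \<in> comp dl rh u"
proof -
  have "(u, deltaW dl rh i u) \<in> trans_pow dl rh \<union> (trans_pow dl rh)\<inverse>"
    unfolding trans_pow_def by blast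
  then show ?thesis unfolding comp_def by (auto intro: r_into_rtrancl)
qed

lemma comp_eq: "v \<in> comp dl rh u \<Longrightarrow> comp dl rh v = comp dl rh u"
proof -
  let ?R = "trans_pow dl rh \<union> (trans_pow dl rh)\<inverse>"
  have "sym (?R\<^sup>*)" by (rule sym_rtrancl) (auto simp: sym_def)
  then show "v \<in> comp dl rh u \<Longrightarrow> comp dl rh v = comp dl rh u"
    unfolding comp_def by (auto dest: symD intro: rtrancl_trans)
qed

lemma comp_deltaW [simp]: "comp dl rh (deltaW dl rh i u) = comp dl rh u"
  by (rule comp_eq[OF comp_deltaW_mem])

lemma deltaW_mem_comp_iff: "deltaW dl rh i a \<in> comp dl rh z \<longleftrightarrow> a \<in> comp dl rh z"
  by (metis comp_deltaW comp_eq comp_refl)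

lemma deltaW_invariant_const_on_comp:
  assumes "\<And>i w. w \<in> comp dl rh z \<Longrightarrow> f (deltaW dl rh i w) = f w"
    and "v \<in> comp dl rh z"
  shows "f v = f z"
proof -
  have "(z, v) \<in> (trans_pow dl rh \<union> (trans_pow dl rh)\<inverse>)\<^sup>*"
    using assms(2) by (simp add: comp_def)
  then show ?thesis
  proof (induction rule: rtrancl_induct)
    case (step y w)
    have "y \<in> comp dl rh z" "w \<in> comp dl rh z"
      using step(1) rtrancl_into_rtrancl[OF step(1,2)] by (simp_all add: comp_def)
    moreover obtain i where "w = deltaW dl rh i y \<or> y = deltaW dl rh i w"
      using step(2) unfolding trans_pow_def by auto
    ultimately show ?case using assms(1) step(3) by metis
  qed simp
qed

lemma length_comp: "v \<in> comp dl rh z \<Longrightarrow> length v = length z"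
  using deltaW_invariant_const_on_comp[of dl rh z length v] by simp

lemma init_path_vertex_comp:
  assumes "init_path dl rh n P" and "j \<le> n"
  shows "\<exists>z. P j = comp dl rh z \<and> length z = j"
  using assms(2)
proof (induction j)
  case 0
  then show ?case using assms(1) by (auto simp: init_path_def)
next
  case (Suc j)
  then obtain z where z: "P j = comp dl rh z" "length z = j" by auto
  have "tedge dl rh (P j) (P (Suc j))" using assms(1) Suc(2) by (simp add: init_path_def)
  then obtain u x where u: "P j = comp dl rh u" and ux: "P (Suc j) = comp dl rh (u @ [x])"
    by (auto simp: tedge_def)
  have "length u = j" using z u length_comp comp_refl by metis
  with ux show ?case by auto
qed

text \<open>Liftability into a component \<open>comp z\<^sub>0\<close> of words of length \<open>n\<close> is decided by the
  length-\<open>n\<close> suffix of a single representative, since that suffix is transformed by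
  \<open>\<delta>\<^sub>i\<close> into the suffix of the image.\<close>

lemma suffixes_in_comp_iff:
  assumes "length z0 = n" and "n \<le> length x"
  shows "(\<forall>y\<in>comp dl rh x. \<exists>s. suffix s y \<and> s \<in> comp dl rh z0)
     \<longleftrightarrow> drop (length x - n) x \<in> comp dl rh z0"
proof
  assume "\<forall>y\<in>comp dl rh x. \<exists>s. suffix s y \<and> s \<in> comp dl rh z0"
  then obtain s where s: "suffix s x" "s \<in> comp dl rh z0" using comp_refl by blast
  then have "length s = n" using length_comp assms(1) by metis
  with s show "drop (length x - n) x \<in> comp dl rh z0" by (auto simp: suffix_def)
next
  assume x: "drop (length x - n) x \<in> comp dl rh z0"
  let ?f = "\<lambda>y. drop (length y - n) y \<in> comp dl rh z0"
  have "?f (deltaW dl rh i w) = ?f w" for i w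
    by (simp add: drop_deltaW deltaW_mem_comp_iff)
  then have "?f y = ?f x" if "y \<in> comp dl rh x" for y
    by (rule deltaW_invariant_const_on_comp[OF _ that])
  with x show "\<forall>y\<in>comp dl rh x. \<exists>s. suffix s y \<and> s \<in> comp dl rh z0"
    using suffix_drop by blast
qed

lemma jword_deltaW: "jword dl rh n P w \<Longrightarrow> jword dl rh n P (deltaW dl rh i w)"
  unfolding jword_def by (simp add: take_deltaW)

locale jungle_end =
  fixes dl :: "'a \<Rightarrow> 'q::finite \<Rightarrow> 'q" and rh :: "'q \<Rightarrow> 'a \<Rightarrow> 'a"
    and n :: nat and P :: "nat \<Rightarrow> 'q list set" and z0 :: "'q list"
  assumes inj_dl: "\<And>i. inj (dl i)"
    and stems_comp: "P n = comp dl rh z0" and length_z0: "length z0 = n"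
begin

lemma length_stem: "v \<in> P n \<Longrightarrow> length v = n"
  using length_comp length_z0 stems_comp by metis

lemma finite_stems: "finite (P n)"
  using finite_subset[OF _ finite_lists_length_eq[of "UNIV :: 'q set" n]] length_stem by auto

lemma liftable_to_last_edge_iff:
  "n \<le> length x \<Longrightarrow> liftable (C, comp dl rh x) (P (n - 1), P n) \<longleftrightarrow> drop (length x - n) x \<in> P n"
  using suffixes_in_comp_iff[OF length_z0, of x dl rh] by (simp add: liftable_def stems_comp)

lemma jword_append_through_stem:
  assumes "jword dl rh n P (X @ v)" and "jword dl rh n P (v @ Y)" and "v \<in> P n"
  shows "jword dl rh n P (X @ v @ Y)"
  unfolding jword_def
proof (intro conjI allI impI)
  have lv: "length v = n" using assms(3) length_stem by blast
  fix i
  assume "i \<le> min (length (X @ v @ Y)) n"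
  then have "take i (X @ v @ Y) = take i (X @ v)" "i \<le> min (length (X @ v)) n"
    using lv by (simp_all add: take_append)
  then show "comp dl rh (take i (X @ v @ Y)) = P i"
    using assms(1) by (simp add: jword_def)
next
  have lv: "length v = n" using assms(3) length_stem by blast
  fix i
  assume i: "n \<le> i \<and> i < length (X @ v @ Y)"
  show "liftable (comp dl rh (take i (X @ v @ Y)), comp dl rh (take (Suc i) (X @ v @ Y)))
      (P (n - 1), P n)"
  proof (cases "i < length (X @ v)")
    case True
    then have "take i (X @ v @ Y) = take i (X @ v)" "take (Suc i) (X @ v @ Y) = take (Suc i) (X @ v)"
      by (simp_all add: take_append)
    then show ?thesis using assms(1) i True by (simp add: jword_def)
  next
    case False
    define j where "j = i - length X"
    have j: "i = length X + j" "n \<le> j" "j < length (v @ Y)" using False i lv by (auto simp: j_def)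
    define w where "w = take (Suc j) (v @ Y)"
    have lw: "length w = Suc j" using j by (simp add: w_def)
    have "liftable (comp dl rh (take j (v @ Y)), comp dl rh w) (P (n - 1), P n)"
      using assms(2) j by (simp add: jword_def w_def)
    then have "drop (Suc j - n) w \<in> P n"
      using liftable_to_last_edge_iff lw j by simp
    moreover have "drop (length (X @ w) - n) (X @ w) = drop (Suc j - n) w"
      using lw j by (simp add: Suc_diff_le)
    moreover have "take (Suc i) (X @ v @ Y) = X @ w"
      using j by (simp add: take_append w_def)
    ultimately show ?thesis
      using liftable_to_last_edge_iff[of "X @ w"] lw j by simp
  qed
qed

lemma stem_equiv_trans:
  assumes "stem_equiv dl rh n P u v" and "stem_equiv dl rh n P v w"
  shows "stem_equiv dl rh n P u w"
proof -
  obtain s where s: "u \<in> P n" "v \<in> P n" "jword dl rh n P (u @ s @ v)" "\<forall>t. rhoW dl rh (u @ s) t = t"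
    using assms(1) by (auto simp: stem_equiv_def)
  obtain s' where s': "w \<in> P n" "jword dl rh n P (v @ s' @ w)" "\<forall>t. rhoW dl rh (v @ s') t = t"
    using assms(2) by (auto simp: stem_equiv_def)
  have "jword dl rh n P ((u @ s) @ v @ (s' @ w))"
    using jword_append_through_stem[of "u @ s" v "s' @ w"] s s' by simp
  then have "jword dl rh n P (u @ (s @ v @ s') @ w)" by simp
  moreover have "\<forall>t. rhoW dl rh (u @ (s @ v @ s')) t = t"
    using rhoW_append[of dl rh "u @ s" "v @ s'"] s(4) s'(3) by simp
  ultimately show ?thesis using s(1) s'(1) unfolding stem_equiv_def by blast
qed

text \<open>Applying \<open>\<delta>\<^sub>i\<close> to a witness \<open>u s v\<close> works because \<open>\<rho>\<^sub>u\<^sub>s\<close> is the identity: the letter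
  \<open>i\<close> leaves \<open>u s\<close> unchanged, so \<open>v\<close> is acted on by the same \<open>\<delta>\<^sub>i\<close>.\<close>

lemma stem_equiv_deltaW:
  assumes "stem_equiv dl rh n P u v"
  shows "stem_equiv dl rh n P (deltaW dl rh i u) (deltaW dl rh i v)"
proof -
  obtain s where s: "u \<in> P n" "v \<in> P n" "jword dl rh n P (u @ s @ v)" "\<forall>t. rhoW dl rh (u @ s) t = t"
    using assms by (auto simp: stem_equiv_def)
  have r: "rho_letter rh (u @ s) i = i" "\<forall>t. rhoW dl rh (deltaW dl rh i (u @ s)) t = t"
    using s(4) rhoW_Cons[of dl rh "u @ s" i] by (metis list.inject)+
  define s' where "s' = deltaW dl rh (rho_letter rh u i) s"
  have us: "deltaW dl rh i (u @ s) = deltaW dl rh i u @ s'"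
    by (simp add: deltaW_append s'_def)
  then have "deltaW dl rh i (u @ s @ v) = deltaW dl rh i u @ s' @ deltaW dl rh i v"
    using deltaW_append[of dl rh i "u @ s" v] r(1) by simp
  then have "jword dl rh n P (deltaW dl rh i u @ s' @ deltaW dl rh i v)"
    using jword_deltaW[OF s(3)] by metis
  moreover have "\<forall>t. rhoW dl rh (deltaW dl rh i u @ s') t = t" using r(2) us by simp
  moreover have "deltaW dl rh i u \<in> P n" "deltaW dl rh i v \<in> P n"
    using s(1,2) stems_comp deltaW_mem_comp_iff by metis+
  ultimately show ?thesis unfolding stem_equiv_def by blast
qed

definition stem_cls :: "'q list \<Rightarrow> 'q list set" where
  "stem_cls w = {v. stem_equiv dl rh n P w v}"

lemma stem_cls_subset: "stem_cls w \<subseteq> P n"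
  by (auto simp: stem_cls_def stem_equiv_def)

lemma stem_cls_deltaW:
  assumes "w \<in> P n"
  shows "stem_cls (deltaW dl rh i w) = deltaW dl rh i ` stem_cls w"
proof (rule image_eq_if_image_subset_on_permuted[OF finite_stems _ _ _ _ assms])
  show inj: "inj_on (deltaW dl rh i) (P n)"
    by (rule inj_on_deltaW[OF inj_dl])
  have "deltaW dl rh i ` P n \<subseteq> P n"
    unfolding stems_comp by (auto simp: deltaW_mem_comp_iff)
  then show "deltaW dl rh i ` P n = P n"
    using endo_inj_surj[OF finite_stems _ inj] by blast
  show "stem_cls w \<subseteq> P n" for w by (rule stem_cls_subset)
  show "deltaW dl rh i ` stem_cls w \<subseteq> stem_cls (deltaW dl rh i w)" for w
    using stem_equiv_deltaW by (auto simp: stem_cls_def)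
qed

lemma card_stem_cls_const:
  assumes "v \<in> P n"
  shows "card (stem_cls v) = card (stem_cls z0)"
proof (rule deltaW_invariant_const_on_comp[of dl rh z0 "\<lambda>w. card (stem_cls w)"])
  fix i w assume "w \<in> comp dl rh z0"
  then have "stem_cls (deltaW dl rh i w) = deltaW dl rh i ` stem_cls w"
    by (simp add: stem_cls_deltaW stems_comp)
  then show "card (stem_cls (deltaW dl rh i w)) = card (stem_cls w)"
    by (simp add: card_image inj_on_deltaW inj_dl)
qed (use assms stems_comp in simp)

lemma stem_cls_eq:
  assumes "w \<in> P n" and "u \<in> stem_cls w"
  shows "stem_cls u = stem_cls w"
proof (rule card_subset_eq)
  show "finite (stem_cls w)" using finite_subset[OF stem_cls_subset finite_stems] .
  have "stem_equiv dl rh n P w u" using assms(2) by (simp add: stem_cls_def)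
  then show "stem_cls u \<subseteq> stem_cls w"
    unfolding stem_cls_def using stem_equiv_trans by blast
  have "u \<in> P n" using assms(2) stem_cls_subset by blast
  then show "card (stem_cls u) = card (stem_cls w)"
    using card_stem_cls_const assms(1) by simp
qed

lemma Ncount_stem_class_const:
  assumes "stem_class dl rh n P \<gamma>" and "st \<in> \<gamma>" and "prefix u st"
  shows "Ncount u \<gamma> k = Ncount (take (length u) z0) (stem_cls z0) k"
proof -
  let ?h = "\<lambda>w. Ncount (take (length u) w) (stem_cls w) k"
  obtain w where w: "w \<in> P n" "\<gamma> = stem_cls w"
    using assms(1) by (auto simp: stem_class_def stem_cls_def)
  have st: "st \<in> comp dl rh z0" using stem_cls_subset w assms(2) stems_comp by blast
  have "?h (deltaW dl rh i v) = ?h v" if "v \<in> comp dl rh z0" for i v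
    using that by (simp add: stems_comp stem_cls_deltaW take_deltaW Ncount_deltaW inj_dl)
  then have "?h st = ?h z0" using st by (rule deltaW_invariant_const_on_comp)
  moreover have "stem_cls st = \<gamma>" using stem_cls_eq w assms(2) by simp
  moreover have "take (length u) st = u" using assms(3) by (auto simp: prefix_def)
  ultimately show ?thesis by simp
qed

end

text \<open>Only reversibility and the trunk ending in a component are needed: connectedness, the
  absence of active self-liftable branches and the hypotheses on \<open>u\<close>, \<open>u'\<close> and \<open>k\<close> beyond
  \<open>|u| = |u'|\<close> play no role in this formalisation.\<close>

theorem proposition5p13:
  fixes dl :: "'a::finite \<Rightarrow> 'q::finite \<Rightarrow> 'q" and rh :: "'q \<Rightarrow> 'a \<Rightarrow> 'a"
    and n :: nat and P :: "nat \<Rightarrow> 'q list set"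
  assumes "connected_aut dl rh" and "bireversible dl rh"
    and "\<not> (\<exists>B. branch dl rh B \<and> active_branch B \<and> self_liftable_branch B)"
    and "jungle_trunk dl rh n P"
    and "jword dl rh n P u" and "length u < n"
    and "stem_class dl rh n P \<gamma>" and "\<exists>st \<in> \<gamma>. prefix u st"
    and "jword dl rh n P u'" and "length u' < n"
    and "stem_class dl rh n P \<gamma>'" and "\<exists>st \<in> \<gamma>'. prefix u' st"
    and "length u = length u'" and "length u + k \<le> n"
  shows "Ncount u \<gamma> k = Ncount u' \<gamma>' k"
proof -
  have "init_path dl rh n P" using assms(4) by (simp add: jungle_trunk_def)
  then obtain z0 where "P n = comp dl rh z0" "length z0 = n"
    using init_path_vertex_comp by blast
  moreover have "\<And>i. inj (dl i)" using assms(2) by (simp add: bireversible_def bij_is_inj)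
  ultimately interpret jungle_end dl rh n P z0 by unfold_locales
  obtain st st' where "st \<in> \<gamma>" "prefix u st" "st' \<in> \<gamma>'" "prefix u' st'"
    using assms(8,12) by blast
  then show ?thesis
    using Ncount_stem_class_const assms(7,11,13) by simp
qed

end
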